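(* Let $\Psi:[t_0,\infty)\to\mathbb{R}_+$ be a non-decreasing positive function and let $f$ be an essentially sub-linear dimension function. If $\sum_{q} q\,f\!\left(\frac{1}{q^2\Psi(q)}\right)<\infty$, then $\sum_{q}\sum_{1\le p\le q} f\!\left(\frac{1}{pq\Psi(q)}\right)<\infty$, where $q$ ranges over integers $q\ge t_0$ and $p$ over integers.
   Context: A dimension function is an increasing continuous function $f:\mathbb{R}_+\to\mathbb{R}_+$ with $f(r)\to 0$ as $r\to 0$. It is essentially sub-linear if there exists $B>1$ such that $\limsup_{x\to 0}\frac{f(Bx)}{f(x)}<B$. *)

theory Defs
  imports "HOL-Analysis.Analysis" "HOL-Library.Extended_Real"
begin

definition dimension_function :: "(real \<Rightarrow> real) \<Rightarrow> bool" where
  "dimension_function f \<longleftrightarrow>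
     mono_on {0..} f \<and> continuous_on {0..} f \<and> (\<forall>x\<ge>0. f x \<ge> 0) \<and>
     (f \<longlongrightarrow> 0) (at_right 0)"

definition essentially_sublinear :: "(real \<Rightarrow> real) \<Rightarrow> bool" where
  "essentially_sublinear f \<longleftrightarrow>
     (\<exists>B>1. Limsup (at_right 0) (\<lambda>x. ereal (f (B * x) / f x)) < ereal B)"

end

theory Submission
  imports Defs
begin

text \<open>Near 0, essential sub-linearity gives f(Bx) \<le> c f(x) with c < B. Split 1 \<le> p \<le> t
  into p \<le> t/B and the at most t integers in (t/B, t]; on the latter f(y/p) \<le> f(By/t) \<le> c f(y/t).
  Induction on the size of t then gives \<Sum>_{p \<le> t} f(y/p) \<le> K t f(y/t), where K = cB/(B-c)
  solves K = Kc/B + c. With y = 1/(q\<Psi>(q)) and t = q, the q-th term is thus at most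
  K q f(1/(q^2\<Psi>(q))) as soon as y is small, i.e. for all large q.\<close>

lemma essentially_sublinear_contraction:
  fixes f :: "real \<Rightarrow> real"
  assumes "dimension_function f" and "essentially_sublinear f"
  obtains B c \<delta> where "B > 1" "0 \<le> c" "c < B" "\<delta> > 0"
    "\<And>x. 0 < x \<Longrightarrow> x < \<delta> \<Longrightarrow> f (B * x) \<le> c * f x"
proof -
  have mono: "mono_on {0..} f" and nn: "\<And>x. x \<ge> 0 \<Longrightarrow> f x \<ge> 0"
    using assms(1) unfolding dimension_function_def by auto
  obtain B where B: "B > 1"
    and LS: "Limsup (at_right 0) (\<lambda>x. ereal (f (B * x) / f x)) < ereal B"
    using assms(2) unfolding essentially_sublinear_def by blast
  obtain c' where c': "Limsup (at_right 0) (\<lambda>x. ereal (f (B * x) / f x)) < ereal c'" "c' < B"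
    using ereal_dense2[OF LS] by auto
  have "eventually (\<lambda>x. f (B * x) / f x < c') (at_right (0::real))"
    using Limsup_lessD[OF c'(1)] by simp
  then obtain b :: real where b: "b > 0" "\<And>x. 0 < x \<Longrightarrow> x < b \<Longrightarrow> f (B * x) / f x < c'"
    unfolding eventually_at_right[OF zero_less_one] by blast
  define c where "c = max c' 1"
  have c: "0 \<le> c" "c < B" "c' \<le> c" using c'(2) B unfolding c_def by auto
  show thesis
  proof (cases "\<exists>a>0. f a = 0")
    case True
    \<comment> \<open>Then f vanishes on [0, a] by monotonicity, where the ratio carries no information.\<close>
    then obtain a where a: "a > 0" "f a = 0" by blast
    show thesis
    proof (rule that[OF B c(1,2)])
      show "a / B > 0" using a B by simp
      fix x assume x: "0 < x" "x < a / B"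
      have "B * x \<le> a" using x B by (simp add: field_simps)
      then have "f (B * x) \<le> f a" using x B a by (intro mono_onD[OF mono]) auto
      moreover have "0 \<le> c * f x" using c nn[of x] x by simp
      ultimately show "f (B * x) \<le> c * f x" using a by simp
    qed
  next
    case False
    show thesis
    proof (rule that[OF B c(1,2) b(1)])
      fix x assume x: "0 < x" "x < b"
      have fx: "f x > 0" using False nn[of x] x by force
      then have "f (B * x) < c' * f x" using b(2)[OF x] by (simp add: divide_less_eq)
      also have "\<dots> \<le> c * f x" using fx c(3) by simp
      finally show "f (B * x) \<le> c * f x" by simp
    qed
  qed
qed

lemma sum_block_le:
  fixes f :: "real \<Rightarrow> real" and B t y :: real
  assumes mono: "mono_on {0..} f" and nn: "\<And>x. x \<ge> 0 \<Longrightarrow> f x \<ge> 0"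
    and "B > 0" "1 \<le> t" "0 < y"
  shows "(\<Sum>p = Suc (nat \<lfloor>t / B\<rfloor>)..nat \<lfloor>t\<rfloor>. f (y / real p)) \<le> t * f (B * (y / t))"
proof -
  have "(\<Sum>p = Suc (nat \<lfloor>t / B\<rfloor>)..nat \<lfloor>t\<rfloor>. f (y / real p))
      \<le> of_nat (card {Suc (nat \<lfloor>t / B\<rfloor>)..nat \<lfloor>t\<rfloor>}) * f (B * (y / t))"
  proof (rule sum_bounded_above)
    fix p assume p: "p \<in> {Suc (nat \<lfloor>t / B\<rfloor>)..nat \<lfloor>t\<rfloor>}"
    have "t / B < real p"
      using p floor_less_cancel[of "t / B" "int p"] by (simp add: less_floor_iff) linarith
    then have "t \<le> B * real p" using assms(3) by (simp add: divide_less_eq mult.commute)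
    moreover have "real p \<ge> 1" using p by auto
    ultimately have "y / real p \<le> B * (y / t)"
      using assms by (simp add: field_simps)
    then show "f (y / real p) \<le> f (B * (y / t))"
      using assms p by (intro mono_onD[OF mono]) auto
  qed
  also have "\<dots> \<le> t * f (B * (y / t))"
  proof (rule mult_right_mono)
    show "of_nat (card {Suc (nat \<lfloor>t / B\<rfloor>)..nat \<lfloor>t\<rfloor>}) \<le> t" using assms(4) by simp linarith
    show "0 \<le> f (B * (y / t))" using assms by (intro nn) simp
  qed
  finally show ?thesis .
qed

lemma sum_f_div_le:
  fixes f :: "real \<Rightarrow> real" and B c \<delta> y t :: real
  assumes mono: "mono_on {0..} f" and nn: "\<And>x. x \<ge> 0 \<Longrightarrow> f x \<ge> 0"
    and B: "B > 1" and c: "0 \<le> c" "c < B"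
    and contr: "\<And>x. 0 < x \<Longrightarrow> x < \<delta> \<Longrightarrow> f (B * x) \<le> c * f x"
    and y: "0 < y" "y < \<delta>" and t: "1 \<le> t"
  shows "(\<Sum>p=1..nat \<lfloor>t\<rfloor>. f (y / real p)) \<le> c * B / (B - c) * t * f (y / t)"
proof -
  define K where "K = c * B / (B - c)"
  have K: "K \<ge> 0" "K * c / B + c = K" unfolding K_def using B c by (auto simp: field_simps)
  have "\<forall>t. 1 \<le> t \<longrightarrow> t < B ^ n \<longrightarrow> (\<Sum>p=1..nat \<lfloor>t\<rfloor>. f (y / real p)) \<le> K * t * f (y / t)" for n
  proof (induction n)
    case 0
    then show ?case by simp
  next
    case (Suc n)
    show ?case
    proof (intro allI impI)
      fix t :: real assume t1: "1 \<le> t" and tB: "t < B ^ Suc n"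
      have "\<delta> * 1 \<le> \<delta> * t" using y t1 by (intro mult_left_mono) auto
      then have "y < \<delta> * t" using y by linarith
      then have yt: "0 < y / t" "y / t < \<delta>" using y t1 by (simp_all add: divide_less_eq)
      have f_yt: "0 \<le> f (y / t)" using yt by (intro nn) simp
      have f_Byt: "f (B * (y / t)) \<le> c * f (y / t)" using contr yt by blast
      have "nat \<lfloor>t / B\<rfloor> \<le> nat \<lfloor>t\<rfloor>"
        using B t1 by (intro nat_mono floor_mono) (simp add: divide_le_eq)
      then have split: "{1..nat \<lfloor>t\<rfloor>} = {1..nat \<lfloor>t / B\<rfloor>} \<union> {Suc (nat \<lfloor>t / B\<rfloor>)..nat \<lfloor>t\<rfloor>}"
        by auto
      have lower: "(\<Sum>p=1..nat \<lfloor>t / B\<rfloor>. f (y / real p)) \<le> K * (t / B) * (c * f (y / t))"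
      proof (cases "1 \<le> t / B")
        case True
        have "t / B < B ^ n" using tB B by (simp add: divide_less_eq mult.commute)
        then have "(\<Sum>p=1..nat \<lfloor>t / B\<rfloor>. f (y / real p)) \<le> K * (t / B) * f (y / (t / B))"
          using Suc.IH True by blast
        also have "y / (t / B) = B * (y / t)" by simp
        also have "K * (t / B) * f (B * (y / t)) \<le> K * (t / B) * (c * f (y / t))"
          using f_Byt K t1 B by (intro mult_left_mono) auto
        finally show ?thesis .
      next
        case False
        then show ?thesis using K c t1 B f_yt by simp
      qed
      have "(\<Sum>p=1..nat \<lfloor>t\<rfloor>. f (y / real p))
          = (\<Sum>p=1..nat \<lfloor>t / B\<rfloor>. f (y / real p)) + (\<Sum>p = Suc (nat \<lfloor>t / B\<rfloor>)..nat \<lfloor>t\<rfloor>. f (y / real p))"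
        unfolding split by (rule sum.union_disjoint) auto
      also have "\<dots> \<le> K * (t / B) * (c * f (y / t)) + t * (c * f (y / t))"
        using lower sum_block_le[OF mono nn _ t1 y(1), of B] mult_left_mono[OF f_Byt, of t] B t1
        by linarith
      also have "\<dots> = t * f (y / t) * (K * c / B + c)" by (simp add: field_simps)
      finally show "(\<Sum>p=1..nat \<lfloor>t\<rfloor>. f (y / real p)) \<le> K * t * f (y / t)"
        using K(2) by (simp add: mult.commute mult.left_commute)
    qed
  qed
  moreover obtain n where "t < B ^ n" using real_arch_pow[OF B] by blast
  ultimately show ?thesis using t unfolding K_def by blast
qed

lemma summable_on_eventually_bounded:
  fixes g h :: "nat \<Rightarrow> real" and A :: "nat set" and K :: real and N :: nat
  assumes "h summable_on A"
    and "\<And>q. q \<in> A \<Longrightarrow> N \<le> q \<Longrightarrow> 0 \<le> g q \<and> g q \<le> K * h q"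
  shows "g summable_on A"
proof -
  have "g summable_on (A \<inter> {..<N})" by (rule summable_on_finite) auto
  moreover have "g summable_on (A \<inter> {N..})"
  proof (rule summable_on_comparison_test)
    show "(\<lambda>q. K * h q) summable_on (A \<inter> {N..})"
      by (rule summable_on_cmult_right, rule summable_on_subset[OF assms(1)]) auto
  qed (use assms(2) in auto)
  ultimately have "g summable_on (A \<inter> {..<N} \<union> A \<inter> {N..})"
    by (rule summable_on_Un_disjoint) auto
  moreover have "A \<inter> {..<N} \<union> A \<inter> {N..} = A" by auto
  ultimately show ?thesis by simp
qed

theorem mainTheorem5:
  fixes \<Psi> f :: "real \<Rightarrow> real" and t\<^sub>0 :: real
  assumes "mono_on {t\<^sub>0..} \<Psi>"
    and "\<forall>x\<ge>t\<^sub>0. \<Psi> x > 0"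
    and "dimension_function f"
    and "essentially_sublinear f"
    and "(\<lambda>q::nat. real q * f (1 / (real q ^ 2 * \<Psi> (real q))))
           summable_on {q. 1 \<le> q \<and> t\<^sub>0 \<le> real q}"
  shows "(\<lambda>q::nat. \<Sum>p=1..q. f (1 / (real p * real q * \<Psi> (real q))))
           summable_on {q. 1 \<le> q \<and> t\<^sub>0 \<le> real q}"
proof -
  have mono: "mono_on {0..} f" and nn: "\<And>x. x \<ge> 0 \<Longrightarrow> f x \<ge> 0"
    using assms(3) unfolding dimension_function_def by auto
  obtain B c \<delta> where B: "B > 1" and c: "0 \<le> c" "c < B" and \<delta>: "\<delta> > 0"
    and contr: "\<And>x. 0 < x \<Longrightarrow> x < \<delta> \<Longrightarrow> f (B * x) \<le> c * f x"
    using essentially_sublinear_contraction[OF assms(3,4)] by blast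
  have \<Psi>0: "\<Psi> t\<^sub>0 > 0" using assms(2) by simp
  obtain N :: nat where N: "1 / (\<delta> * \<Psi> t\<^sub>0) < real N" using reals_Archimedean2 by blast
  show ?thesis
  proof (rule summable_on_eventually_bounded[OF assms(5)])
    fix q :: nat assume q: "q \<in> {q. 1 \<le> q \<and> t\<^sub>0 \<le> real q}" and qN: "N \<le> q"
    have \<Psi>q: "\<Psi> t\<^sub>0 \<le> \<Psi> (real q)" using q by (intro mono_onD[OF assms(1)]) auto
    define y where "y = 1 / (real q * \<Psi> (real q))"
    have qy: "0 < real q * \<Psi> (real q)" using q \<Psi>q \<Psi>0 by simp
    have "1 / \<delta> < real N * \<Psi> t\<^sub>0" using N \<Psi>0 \<delta> by (simp add: field_simps)
    also have "\<dots> \<le> real q * \<Psi> (real q)" using qN \<Psi>q \<Psi>0 by (intro mult_mono) auto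
    finally have y: "0 < y" "y < \<delta>" unfolding y_def using qy \<delta> by (simp_all add: field_simps)
    have y_div: "y / real p = 1 / (real p * real q * \<Psi> (real q))" for p
      unfolding y_def by simp
    have "(\<Sum>p=1..nat \<lfloor>real q\<rfloor>. f (y / real p)) \<le> c * B / (B - c) * real q * f (y / real q)"
      using q by (intro sum_f_div_le[OF mono nn B c contr y]) auto
    then show "0 \<le> (\<Sum>p=1..q. f (1 / (real p * real q * \<Psi> (real q))))
      \<and> (\<Sum>p=1..q. f (1 / (real p * real q * \<Psi> (real q))))
        \<le> c * B / (B - c) * (real q * f (1 / (real q ^ 2 * \<Psi> (real q))))"
      unfolding y_div using qy by (auto intro!: sum_nonneg nn simp: power2_eq_square mult.assoc)
  qed
qed

end
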